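(* In the following algorithm, each vertex $v$ is moved in the step "move vertices into place on the circle according to $O$" at most $\deg(v)-1$ times, where $\deg(v)$ is its final degree. Algorithm: maintain a straight-line drawing of an outerplanar graph $G$, revealed edge by edge in the ordered streaming model, with all vertices on a circle in the order in which they appear on the outer face; when a new edge $e=(p,q)$ arrives, if $q$ is a new vertex place it on the circle according to the ordering that includes $e$; otherwise add a virtual arc $e'$ between $p$ and $q$ according to the specification of $e$, crossing no existing edge, compute the order $O$ of vertices on the outer face taking $e'$ into account, and move the vertices into place on the circle according to $O$; then draw $e$.
   Context: Ordered streaming model: the graph is revealed one edge at a time, connected and outerplanar at all times, edges never disappearing, with each edge accompanied by its position in the clockwise order of edges around its endpoints. A graph is outerplanar if it has a planar drawing with all vertices on the outer face. *)

theory Defs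
  imports Main
begin

definition idx :: "'a list \<Rightarrow> 'a \<Rightarrow> nat" where
  "idx xs x = length (takeWhile (\<lambda>y. y \<noteq> x) xs)"

definition ins :: "nat \<Rightarrow> 'a \<Rightarrow> 'a list \<Rightarrow> 'a list" where
  "ins k x xs = take k xs @ x # drop k xs"

definition cyc_eq :: "'a list \<Rightarrow> 'a list \<Rightarrow> bool" where
  "cyc_eq xs ys \<longleftrightarrow> (\<exists>n. rotate n xs = ys)"

(* ===== Embedded graphs =====
   A rotation system rot :: 'v \<Rightarrow> 'v list gives, for every vertex, the clockwise
   cyclic order of its neighbours (the list is read cyclically).
   A circle arrangement C :: 'v list lists the vertices in clockwise order
   around the circle (read cyclically). *)

definition cpos :: "'v list \<Rightarrow> 'v \<Rightarrow> 'v \<Rightarrow> nat" where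
  "cpos C v w = (idx C w + length C - idx C v) mod length C"

(* chords ab and cd (four distinct endpoints) cross in the circle drawing *)
definition crossing :: "'v list \<Rightarrow> 'v \<Rightarrow> 'v \<Rightarrow> 'v \<Rightarrow> 'v \<Rightarrow> bool" where
  "crossing C a b c d \<longleftrightarrow> ((cpos C a c < cpos C a b) \<noteq> (cpos C a d < cpos C a b))"

(* C is a straight-line drawing of the embedded graph rot with all vertices on
   a circle: planar (no two chords cross) and respecting the given clockwise
   rotation at every vertex. *)
definition circ_valid :: "('v \<Rightarrow> 'v list) \<Rightarrow> 'v list \<Rightarrow> bool" where
  "circ_valid rot C \<longleftrightarrow>
     distinct C \<and>
     (\<forall>v. v \<notin> set C \<longrightarrow> rot v = []) \<and>
     (\<forall>v\<in>set C. distinct (rot v) \<and> set (rot v) \<subseteq> set C - {v} \<and>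
                 (\<forall>w\<in>set (rot v). v \<in> set (rot w))) \<and>
     (\<forall>a b c d. b \<in> set (rot a) \<and> d \<in> set (rot c) \<and> distinct [a, b, c, d]
                \<longrightarrow> \<not> crossing C a b c d) \<and>
     (\<forall>v\<in>set C. cyc_eq (rot v) (sort_key (cpos C v) (rot v)))"

(* ===== Stream events =====
   An event (p, q, i, j): new edge pq, where p is already present; q is
   inserted at position i of the clockwise order around p and p at position j
   of the clockwise order around q (j = 0 if q is new). *)
type_synonym 'v event = "'v \<times> 'v \<times> nat \<times> nat"

fun upd :: "('v \<Rightarrow> 'v list) \<Rightarrow> 'v event \<Rightarrow> ('v \<Rightarrow> 'v list)" where
  "upd rot (p, q, i, j) = rot(p := ins i q (rot p), q := ins j p (rot q))"

(* the event is admissible, and the graph stays outerplanar (with its given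
   embedding), i.e. it has a circle drawing respecting the rotation system *)
fun ext_ok :: "'v set \<Rightarrow> ('v \<Rightarrow> 'v list) \<Rightarrow> 'v event \<Rightarrow> bool" where
  "ext_ok V rot (p, q, i, j) \<longleftrightarrow>
     p \<in> V \<and> q \<noteq> p \<and> q \<notin> set (rot p) \<and>
     i \<le> length (rot p) \<and> j \<le> length (rot q) \<and>
     (\<exists>D. set D = insert q V \<and> circ_valid (upd rot (p, q, i, j)) D)"

fun stream_ok :: "'v set \<Rightarrow> ('v \<Rightarrow> 'v list) \<Rightarrow> 'v event list \<Rightarrow> bool" where
  "stream_ok V rot [] = True"
| "stream_ok V rot ((p, q, i, j) # es) \<longleftrightarrow>
     ext_ok V rot (p, q, i, j) \<and> stream_ok (insert q V) (upd rot (p, q, i, j)) es"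

(* ===== Faces =====
   A corner (v, i) is the angular sector at v going clockwise from the
   neighbour rot v ! i to the next neighbour rot v ! ((i+1) mod deg v).
   Face traversal (face kept on the left) maps a corner to the next corner. *)
definition nxt :: "('v \<Rightarrow> 'v list) \<Rightarrow> 'v \<times> nat \<Rightarrow> 'v \<times> nat" where
  "nxt rot c = (let v = fst c; i = snd c; b = rot v ! (Suc i mod length (rot v))
                in (b, idx (rot b) v))"

(* corner (v, i) is the corner of v facing the outside of the circle in
   drawing C: it ends at the first neighbour of v clockwise from v *)
definition is_outc :: "('v \<Rightarrow> 'v list) \<Rightarrow> 'v list \<Rightarrow> 'v \<Rightarrow> nat \<Rightarrow> bool" where
  "is_outc rot C v i \<longleftrightarrow> i < length (rot v) \<and>
     (\<forall>u\<in>set (rot v). cpos C v (rot v ! (Suc i mod length (rot v))) \<le> cpos C v u)"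

(* corner of the old embedding into which the new edge is inserted at v
   (the new neighbour is inserted at index k of rot v) *)
definition ins_corner :: "('v \<Rightarrow> 'v list) \<Rightarrow> 'v \<Rightarrow> nat \<Rightarrow> 'v \<times> nat" where
  "ins_corner rot v k = (v, (k + length (rot v) - 1) mod length (rot v))"

(* The virtual arc e' from corner cp to corner cq splits the face through cp:
   its boundary walk cp = c_0, c_1, ..., c_m = cq, ..., c_k = cp is split into
   the two sides {c_1..c_{m-1}} and {c_{m+1}..c_{k-1}}.  X is the side that
   gets enclosed by e' (it ceases to be on the outer face).  If the split face
   is the outer face of the current drawing, the new outer face (the other
   side together with p and q) must contain all vertices (outerplanarity);
   either side satisfying this may be chosen. *)
definition enclosed_side ::
  "('v \<Rightarrow> 'v list) \<Rightarrow> 'v list \<Rightarrow> 'v event \<Rightarrow> ('v \<times> nat) set \<Rightarrow> bool" where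
  "enclosed_side rot C e X \<longleftrightarrow>
     (case e of (p, q, i, j) \<Rightarrow>
       (let cp = ins_corner rot p i; cq = ins_corner rot q j;
            w = (\<lambda>n. (nxt rot ^^ n) cp) in
        \<exists>m k. 0 < m \<and> m < k \<and> w m = cq \<and> w k = cp \<and>
              (\<forall>n. 0 < n \<and> n < k \<longrightarrow> w n \<noteq> cp) \<and>
              (let S1 = w ` {0<..<m}; S2 = w ` {m<..<k};
                   outer = (\<exists>v l. is_outc rot C v l \<and> (v, l) \<in> w ` {0..<k}) in
               (X = S1 \<and> (outer \<longrightarrow> fst ` S2 \<union> {p, q} = set C)) \<or>
               (X = S2 \<and> (outer \<longrightarrow> fst ` S1 \<union> {p, q} = set C)))))"

(* vertices that have to be moved: those whose outside corner gets enclosed *)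
definition moved :: "('v \<Rightarrow> 'v list) \<Rightarrow> 'v list \<Rightarrow> ('v \<times> nat) set \<Rightarrow> 'v set" where
  "moved rot C X = {v \<in> set C. \<exists>l. is_outc rot C v l \<and> (v, l) \<in> X}"

(* ===== One step of the algorithm =====
   alg_step rot C e C' M: with current embedding rot and circle drawing C,
   event e arrives; the new drawing is C' and M is the set of vertices moved
   in the step "move vertices into place on the circle according to O". *)
fun alg_step :: "('v \<Rightarrow> 'v list) \<Rightarrow> 'v list \<Rightarrow> 'v event \<Rightarrow> 'v list \<Rightarrow> 'v set \<Rightarrow> bool" where
  "alg_step rot C (p, q, i, j) C' M \<longleftrightarrow>
     circ_valid (upd rot (p, q, i, j)) C' \<and>
     (if q \<notin> set C then
        M = {} \<and> (\<exists>k\<le>length C. C' = ins k q C)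
      else
        (\<exists>X. enclosed_side rot C (p, q, i, j) X \<and> M = moved rot C X) \<and>
        cyc_eq (filter (\<lambda>v. v \<notin> M) C) (filter (\<lambda>v. v \<notin> M) C'))"

inductive alg_run ::
  "('v \<Rightarrow> 'v list) \<Rightarrow> 'v list \<Rightarrow> 'v event list \<Rightarrow> ('v \<Rightarrow> 'v list) \<Rightarrow> 'v list \<Rightarrow> 'v set list \<Rightarrow> bool"
where
  run_Nil: "alg_run rot C [] rot C []"
| run_Cons: "alg_step rot C e C' M \<Longrightarrow> alg_run (upd rot e) C' es rot'' C'' Ms \<Longrightarrow>
             alg_run rot C (e # es) rot'' C'' (M # Ms)"

end

theory Submission
  imports Defs
begin

text \<open>For a vertex v count the faces of the current embedding at v, i.e. the orbits of the
  face traversal through the darts leaving v; there are at most deg v of them. Inserting an edge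
  between two corners of a common face only cuts that face in two, so the count never
  decreases. A vertex is moved only if its outer corner lies on the enclosed side of the cut
  outer face; by outerplanarity v also occurs on the other side, so its darts end up in both new
  faces and its count increases. A moved vertex already has a face, hence it is moved at most
  deg v - 1 times.\<close>

section \<open>Cyclic successor in a list\<close>

lemma idx_Cons: "idx (x # xs) y = (if x = y then 0 else Suc (idx xs y))"
  by (simp add: idx_def)

lemma idx_nth: "distinct xs \<Longrightarrow> t < length xs \<Longrightarrow> idx xs (xs ! t) = t"
proof (induction xs arbitrary: t)
  case (Cons x xs)
  then show ?case by (cases t) (auto simp: idx_Cons nth_mem)
qed simp

lemma idx_less_length: "x \<in> set xs \<Longrightarrow> idx xs x < length xs"
  by (induction xs) (auto simp: idx_Cons)

lemma nth_idx: "x \<in> set xs \<Longrightarrow> xs ! idx xs x = x"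
  by (induction xs) (auto simp: idx_Cons)

lemma idx_append_in: "x \<in> set xs \<Longrightarrow> idx (xs @ ys) x = idx xs x"
  by (induction xs) (auto simp: idx_Cons)

lemma idx_snoc_notin: "x \<notin> set xs \<Longrightarrow> idx (xs @ [x]) x = length xs"
  by (induction xs) (auto simp: idx_Cons)

lemma set_ins: "set (ins i q r) = insert q (set r)"
  unfolding ins_def using append_take_drop_id[of i r] by (metis Un_insert_right set_append set_simps(2))

lemma distinct_ins: "distinct r \<Longrightarrow> q \<notin> set r \<Longrightarrow> distinct (ins i q r)"
  unfolding ins_def using set_take_disj_set_drop_if_distinct[of r i i]
  by (auto simp: distinct_append dest: in_set_takeD in_set_dropD)

lemma rotate_ins:
  assumes "i \<le> length r" shows "rotate i (ins i q r) = q # rotate i r"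
proof -
  have "length (take i r) = i" using assms by simp
  then show ?thesis
    using rotate_append[of "take i r" "q # drop i r"] rotate_append[of "take i r" "drop i r"]
    by (simp add: ins_def)
qed

lemma last_rotate: "r \<noteq> [] \<Longrightarrow> last (rotate i r) = r ! ((i + length r - 1) mod length r)"
  by (simp add: last_conv_nth nth_rotate Suc_le_eq)

definition cyc_succ :: "'a list \<Rightarrow> 'a \<Rightarrow> 'a" where
  "cyc_succ xs c = xs ! (Suc (idx xs c) mod length xs)"

lemma cyc_succ_in_set: "c \<in> set xs \<Longrightarrow> cyc_succ xs c \<in> set xs"
  unfolding cyc_succ_def by (metis length_pos_if_in_set mod_less_divisor nth_mem)

lemma cyc_succ_inj:
  assumes "distinct xs" "a \<in> set xs" "b \<in> set xs" "cyc_succ xs a = cyc_succ xs b"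
  shows "a = b"
proof -
  have "Suc (idx xs a) mod length xs = Suc (idx xs b) mod length xs"
    using assms length_pos_if_in_set[OF assms(2)] unfolding cyc_succ_def
    by (simp add: nth_eq_iff_index_eq)
  moreover have "idx xs a < length xs" "idx xs b < length xs"
    using idx_less_length[OF assms(2)] idx_less_length[OF assms(3)] by simp_all
  ultimately have "idx xs a = idx xs b" by (auto simp: mod_Suc split: if_splits)
  then show ?thesis using nth_idx assms(2,3) by metis
qed

lemma cyc_succ_last: "xs \<noteq> [] \<Longrightarrow> distinct xs \<Longrightarrow> cyc_succ xs (last xs) = hd xs"
  by (simp add: cyc_succ_def last_conv_nth idx_nth hd_conv_nth)

lemma cyc_succ_Cons:
  assumes "distinct (q # s)" "s \<noteq> []"
  shows "cyc_succ (q # s) q = hd s"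
    and "cyc_succ (q # s) (last s) = q"
    and "c \<in> set s \<Longrightarrow> c \<noteq> last s \<Longrightarrow> cyc_succ (q # s) c = cyc_succ s c"
proof -
  show "cyc_succ (q # s) q = hd s"
    using assms by (simp add: cyc_succ_def idx_Cons hd_conv_nth)
  show "cyc_succ (q # s) (last s) = q"
    using assms by (auto simp: cyc_succ_def idx_Cons last_conv_nth idx_nth)
  assume c: "c \<in> set s" "c \<noteq> last s"
  have "idx s c \<noteq> length s - 1"
    using c assms(2) nth_idx[OF c(1)] by (metis last_conv_nth)
  then have "Suc (idx s c) < length s" using idx_less_length[OF c(1)] by linarith
  then show "cyc_succ (q # s) c = cyc_succ s c"
    using c assms(1) by (auto simp: cyc_succ_def idx_Cons)
qed

lemma cyc_succ_rotate1:
  assumes "distinct xs" "c \<in> set xs"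
  shows "cyc_succ (rotate1 xs) c = cyc_succ xs c"
proof (cases xs)
  case (Cons x ys)
  show ?thesis
  proof (cases "ys = []")
    case False
    have "cyc_succ (x # ys) c = cyc_succ (ys @ [x]) c"
    proof (cases "c = x")
      case True
      then show ?thesis using Cons False assms
        by (simp add: cyc_succ_def idx_Cons idx_snoc_notin hd_conv_nth nth_append)
    next
      case cx: False
      then have c: "c \<in> set ys" using Cons assms(2) by simp
      then show ?thesis using Cons cx idx_less_length[OF c]
        by (auto simp: cyc_succ_def idx_Cons idx_append_in nth_append mod_Suc
                 simp del: length_greater_0_conv)
    qed
    then show ?thesis using Cons by simp
  qed (use Cons in simp)
qed simp

lemma cyc_succ_rotate: "distinct xs \<Longrightarrow> c \<in> set xs \<Longrightarrow> cyc_succ (rotate n xs) c = cyc_succ xs c"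
  by (induction n) (simp_all add: cyc_succ_rotate1)

lemma cyc_succ_ins:
  assumes r: "distinct r" "q \<notin> set r" "r \<noteq> []" "i \<le> length r"
    and a: "a = r ! ((i + length r - 1) mod length r)"
  shows "c \<in> set r \<Longrightarrow> cyc_succ (ins i q r) c = (if c = a then q else cyc_succ r c)"
    and "cyc_succ (ins i q r) q = cyc_succ r a"
proof -
  \<comment> \<open>rotating by i brings q to the front, and cyc_succ is invariant under rotation\<close>
  let ?s = "rotate i r"
  have last: "last ?s = a" using last_rotate[OF r(3)] a by simp
  have ds: "distinct (q # ?s)" "?s \<noteq> []" using r by auto
  have rot: "cyc_succ (ins i q r) c = cyc_succ (q # ?s) c" if "c \<in> insert q (set r)" for c
    using cyc_succ_rotate[of "ins i q r" c i] distinct_ins[OF r(1,2)] that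
    by (simp add: set_ins rotate_ins[OF r(4)])
  show "c \<in> set r \<Longrightarrow> cyc_succ (ins i q r) c = (if c = a then q else cyc_succ r c)"
    using rot cyc_succ_Cons[OF ds] cyc_succ_rotate[OF r(1)] last by auto
  have "a \<in> set r" using last ds(2) by (metis last_in_set set_rotate)
  then show "cyc_succ (ins i q r) q = cyc_succ r a"
    using rot cyc_succ_Cons(1)[OF ds] cyc_succ_last[OF ds(2)] cyc_succ_rotate[OF r(1)] last ds
    by (metis distinct.simps(2) insertI1)
qed

section \<open>Orbits of a map\<close>

definition orbit :: "('a \<Rightarrow> 'a) \<Rightarrow> 'a \<Rightarrow> 'a set" where
  "orbit f z = range (\<lambda>n. (f ^^ n) z)"

lemma funpow_in_orbit: "(f ^^ n) z \<in> orbit f z"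
  by (simp add: orbit_def)

lemma self_in_orbit: "z \<in> orbit f z"
  using funpow_in_orbit[of 0 f] by simp

lemma orbit_trans: "u \<in> orbit f z \<Longrightarrow> orbit f u \<subseteq> orbit f z"
  unfolding orbit_def by (auto simp: funpow_add[symmetric, THEN fun_cong, simplified])

lemma orbit_step: "u \<in> orbit f z \<Longrightarrow> f u \<in> orbit f z"
proof -
  assume "u \<in> orbit f z"
  then obtain n where "u = (f ^^ n) z" unfolding orbit_def by blast
  then have "f u = (f ^^ Suc n) z" by simp
  then show ?thesis by (simp only: funpow_in_orbit)
qed

lemma funpow_in_invariant: "f ` D \<subseteq> D \<Longrightarrow> z \<in> D \<Longrightarrow> (f ^^ n) z \<in> D"
  by (induction n) (simp_all add: image_subset_iff)

lemma orbit_subset_invariant: "f ` D \<subseteq> D \<Longrightarrow> z \<in> D \<Longrightarrow> orbit f z \<subseteq> D"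
  using funpow_in_invariant[of f D z] unfolding orbit_def by blast

lemma inj_on_funpow:
  assumes maps: "f ` D \<subseteq> D" and inj: "inj_on f D"
  shows "inj_on (f ^^ n) D"
proof (induction n)
  case (Suc n)
  have "(f ^^ n) ` D \<subseteq> D" using funpow_in_invariant[OF maps] by auto
  then have "inj_on (f \<circ> f ^^ n) D" using comp_inj_on[OF Suc inj_on_subset[OF inj]] by blast
  then show ?case by (simp add: comp_def)
qed simp

lemma funpow_eq_return:
  assumes maps: "f ` D \<subseteq> D" and inj: "inj_on f D" and "z \<in> D"
    and "a \<le> b" "(f ^^ a) z = (f ^^ b) z"
  shows "(f ^^ (b - a)) z = z"
proof -
  have "(f ^^ a) z = (f ^^ a) ((f ^^ (b - a)) z)"
    using assms(4,5) by (metis funpow_add le_add_diff_inverse o_apply)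
  then show ?thesis
    using inj_on_funpow[OF maps inj, of a] funpow_in_invariant[OF maps] \<open>z \<in> D\<close>
    by (auto simp: inj_on_def)
qed

lemma funpow_periodic:
  assumes maps: "f ` D \<subseteq> D" and inj: "inj_on f D" and "finite D" "z \<in> D"
  obtains P where "P > 0" "(f ^^ P) z = z"
proof -
  have "finite (range (\<lambda>n. (f ^^ n) z))"
    using orbit_subset_invariant[OF maps \<open>z \<in> D\<close>] \<open>finite D\<close> finite_subset
    unfolding orbit_def by blast
  then have "\<not> inj (\<lambda>n. (f ^^ n) z)"
    using finite_imageD infinite_UNIV_nat by blast
  then obtain a b where "a \<noteq> b" "(f ^^ a) z = (f ^^ b) z" unfolding inj_def by blast
  then obtain a b where ab: "a < b" "(f ^^ a) z = (f ^^ b) z"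
    by (cases a b rule: linorder_cases) auto
  then have "(f ^^ (b - a)) z = z" using funpow_eq_return[OF maps inj \<open>z \<in> D\<close>] by simp
  then show ?thesis using that[of "b - a"] ab(1) by simp
qed

lemma orbit_sym:
  assumes maps: "f ` D \<subseteq> D" and "inj_on f D" "finite D" "z \<in> D" and u: "u \<in> orbit f z"
  shows "orbit f u = orbit f z"
proof
  show "orbit f u \<subseteq> orbit f z" using orbit_trans[OF u] .
  obtain n where n: "u = (f ^^ n) z" using u unfolding orbit_def by auto
  obtain P where P: "P > 0" "(f ^^ P) z = z" by (rule funpow_periodic[OF assms(1-4)])
  have "((f ^^ P) ^^ n) z = z" by (induction n) (simp_all add: P(2))
  then have "(f ^^ (P * n)) z = z" by (simp add: funpow_mult)
  moreover have "P * n = (P * n - n) + n" using P(1) by simp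
  ultimately have "(f ^^ (P * n - n)) u = z"
    using n funpow_add[of "P * n - n" n f] by (metis comp_apply)
  then have "z \<in> orbit f u" using funpow_in_orbit by metis
  then show "orbit f z \<subseteq> orbit f u" by (rule orbit_trans)
qed

lemma funpow_distinct_before_return:
  assumes maps: "f ` D \<subseteq> D" and inj: "inj_on f D" and "z \<in> D"
    and no_return: "\<forall>n. 0 < n \<and> n < k \<longrightarrow> (f ^^ n) z \<noteq> z"
    and "a < b" "b < k"
  shows "(f ^^ a) z \<noteq> (f ^^ b) z"
proof
  assume "(f ^^ a) z = (f ^^ b) z"
  then have "(f ^^ (b - a)) z = z"
    using funpow_eq_return[OF maps inj \<open>z \<in> D\<close>] \<open>a < b\<close> by simp
  then show False using no_return \<open>a < b\<close> \<open>b < k\<close> by auto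
qed

lemma orbit_detour_invariant:
  assumes maps: "f ` D \<subseteq> D"
    and agree: "\<And>u. u \<in> D - E \<Longrightarrow> g u = f u"
    and exit: "g ` E \<subseteq> N" and detour: "g ` N \<subseteq> N \<union> f ` E"
    and E_orbit: "\<And>e e'. e \<in> E \<Longrightarrow> e' \<in> E \<Longrightarrow> e' \<in> orbit f e"
    and "z \<in> D"
  shows "(g ^^ n) z \<in> orbit f z \<or> ((g ^^ n) z \<in> N \<and> (\<exists>e\<in>E. e \<in> orbit f z))"
proof (induction n)
  case 0 then show ?case by (simp add: self_in_orbit)
next
  case (Suc n)
  define u where "u = (g ^^ n) z"
  have "g u \<in> orbit f z \<or> (g u \<in> N \<and> (\<exists>e\<in>E. e \<in> orbit f z))"
  proof (cases "u \<in> orbit f z")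
    case True
    then have "u \<in> D" using orbit_subset_invariant[OF maps \<open>z \<in> D\<close>] by blast
    show ?thesis
    proof (cases "u \<in> E")
      case False
      then have "g u = f u" using agree \<open>u \<in> D\<close> by blast
      then show ?thesis using orbit_step[OF True] by simp
    next
      case uE: True
      then have "g u \<in> N" using exit by blast
      then show ?thesis using uE True by blast
    qed
  next
    case False
    then obtain e where e: "u \<in> N" "e \<in> E" "e \<in> orbit f z"
      using Suc.IH unfolding u_def by blast
    have "g u \<in> N \<or> (\<exists>e'\<in>E. g u = f e')" using detour e(1) by blast
    then show ?thesis
    proof
      assume "\<exists>e'\<in>E. g u = f e'"
      then obtain e' where e': "e' \<in> E" "g u = f e'" by blast
      have "orbit f e \<subseteq> orbit f z" using orbit_trans[OF e(3)] .
      then have "e' \<in> orbit f z" using E_orbit[OF e(2) e'(1)] by blast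
      then show ?thesis using orbit_step e'(2) by metis
    qed (use e in blast)
  qed
  then show ?case unfolding u_def by simp
qed

text \<open>g agrees with f on D except on E, from where it detours through fresh points N and
  re-enters D right behind E; as E lies in a single f-orbit, this can only cut f-orbits.\<close>
lemma orbit_inter_subset_orbit:
  assumes maps: "f ` D \<subseteq> D" and fresh: "N \<inter> D = {}"
    and agree: "\<And>u. u \<in> D - E \<Longrightarrow> g u = f u"
    and exit: "g ` E \<subseteq> N" and detour: "g ` N \<subseteq> N \<union> f ` E"
    and E_orbit: "\<And>e e'. e \<in> E \<Longrightarrow> e' \<in> E \<Longrightarrow> e' \<in> orbit f e"
    and "z \<in> D"
  shows "orbit g z \<inter> D \<subseteq> orbit f z"
proof
  fix w assume w: "w \<in> orbit g z \<inter> D"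
  then obtain n where "w = (g ^^ n) z" unfolding orbit_def by blast
  then show "w \<in> orbit f z"
    using orbit_detour_invariant[OF maps agree exit detour E_orbit \<open>z \<in> D\<close>, of n] fresh w
    by blast
qed

section \<open>Faces of a rotation system\<close>

definition darts :: "('v \<Rightarrow> 'v list) \<Rightarrow> ('v \<times> 'v) set" where
  "darts rot = {(v, w). w \<in> set (rot v)}"

definition darts_at :: "('v \<Rightarrow> 'v list) \<Rightarrow> 'v \<Rightarrow> ('v \<times> 'v) set" where
  "darts_at rot v = Pair v ` set (rot v)"

definition rotation_system :: "('v \<Rightarrow> 'v list) \<Rightarrow> bool" where
  "rotation_system rot \<longleftrightarrow> (\<forall>v. distinct (rot v)) \<and>
     (\<forall>v w. w \<in> set (rot v) \<longrightarrow> v \<in> set (rot w)) \<and> finite (darts rot)"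

definition face_succ :: "('v \<Rightarrow> 'v list) \<Rightarrow> 'v \<times> 'v \<Rightarrow> 'v \<times> 'v" where
  "face_succ rot z = (cyc_succ (rot (fst z)) (snd z), fst z)"

definition face_count :: "('v \<Rightarrow> 'v list) \<Rightarrow> 'v \<Rightarrow> nat" where
  "face_count rot v = card (orbit (face_succ rot) ` darts_at rot v)"

lemma darts_at_subset_darts: "darts_at rot v \<subseteq> darts rot"
  unfolding darts_at_def darts_def by auto

lemma darts_at_mono: "set (rot v) \<subseteq> set (rot' v) \<Longrightarrow> darts_at rot v \<subseteq> darts_at rot' v"
  by (auto simp: darts_at_def)

lemma darts_at_fst: "z \<in> darts rot \<Longrightarrow> z \<in> darts_at rot (fst z)"
  by (auto simp: darts_def darts_at_def)

lemma rotation_system_not_adjacent: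
  "rotation_system rot \<Longrightarrow> q \<notin> set (rot p) \<Longrightarrow> p \<notin> set (rot q)"
  unfolding rotation_system_def by blast

lemma face_succ_darts:
  assumes "rotation_system rot" shows "face_succ rot ` darts rot \<subseteq> darts rot"
proof (clarsimp simp: darts_def face_succ_def)
  fix v w assume "w \<in> set (rot v)"
  then have "cyc_succ (rot v) w \<in> set (rot v)" by (rule cyc_succ_in_set)
  then show "v \<in> set (rot (cyc_succ (rot v) w))" using assms unfolding rotation_system_def by blast
qed

lemma inj_on_face_succ:
  assumes "rotation_system rot" shows "inj_on (face_succ rot) (darts rot)"
proof (rule inj_onI, clarsimp simp: darts_def face_succ_def)
  fix v w w' assume "w \<in> set (rot v)" "w' \<in> set (rot v)" "cyc_succ (rot v) w = cyc_succ (rot v) w'"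
  moreover have "distinct (rot v)" using assms unfolding rotation_system_def by blast
  ultimately show "w = w'" using cyc_succ_inj by metis
qed

lemma face_orbit_sym:
  assumes rs: "rotation_system rot" and "z \<in> darts rot" "u \<in> orbit (face_succ rot) z"
  shows "orbit (face_succ rot) u = orbit (face_succ rot) z"
proof -
  have "finite (darts rot)" using rs unfolding rotation_system_def by blast
  then show ?thesis using orbit_sym[OF face_succ_darts[OF rs] inj_on_face_succ[OF rs]] assms(2,3)
    by blast
qed

lemma face_count_le_length: "face_count rot v \<le> length (rot v)"
proof -
  have "face_count rot v \<le> card (darts_at rot v)"
    unfolding face_count_def darts_at_def by (simp add: card_image_le)
  also have "\<dots> \<le> card (set (rot v))" unfolding darts_at_def by (simp add: card_image_le)
  also have "\<dots> \<le> length (rot v)" by (rule card_length)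
  finally show ?thesis .
qed

lemma face_count_pos: "rot v \<noteq> [] \<Longrightarrow> 0 < face_count rot v"
  unfolding face_count_def darts_at_def by (simp add: card_gt_0_iff)

lemma circ_valid_rotation_system:
  assumes "circ_valid rot C" shows "rotation_system rot"
proof -
  have isolated: "\<And>v. v \<notin> set C \<Longrightarrow> rot v = []"
    using assms unfolding circ_valid_def by blast
  have "darts rot \<subseteq> set C \<times> set C"
  proof
    fix z assume z: "z \<in> darts rot"
    then have "fst z \<in> set C" using isolated unfolding darts_def by fastforce
    then have "set (rot (fst z)) \<subseteq> set C" using assms unfolding circ_valid_def by blast
    then show "z \<in> set C \<times> set C"
      using z \<open>fst z \<in> set C\<close> unfolding darts_def by (auto simp: mem_Times_iff)
  qed
  then have "finite (darts rot)" by (rule finite_subset) simp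
  moreover have "distinct (rot v)" for v
    using assms isolated unfolding circ_valid_def by (cases "v \<in> set C") auto
  moreover have "v \<in> set (rot w)" if "w \<in> set (rot v)" for v w
    using assms isolated that unfolding circ_valid_def by (cases "v \<in> set C") auto
  ultimately show ?thesis unfolding rotation_system_def by blast
qed

text \<open>A corner (v, i) is identified with the dart leaving v towards the neighbour rot v ! i at
  which it starts; under this identification the face traversal nxt becomes face_succ.\<close>
definition is_corner :: "('v \<Rightarrow> 'v list) \<Rightarrow> 'v \<times> nat \<Rightarrow> bool" where
  "is_corner rot c \<longleftrightarrow> snd c < length (rot (fst c))"

definition corner_dart :: "('v \<Rightarrow> 'v list) \<Rightarrow> 'v \<times> nat \<Rightarrow> 'v \<times> 'v" where
  "corner_dart rot c = (fst c, rot (fst c) ! snd c)"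

lemma corner_dart_in_darts_at: "is_corner rot c \<Longrightarrow> corner_dart rot c \<in> darts_at rot (fst c)"
  unfolding is_corner_def corner_dart_def darts_at_def by simp

lemma corner_dart_inj:
  assumes "rotation_system rot" "is_corner rot c" "is_corner rot c'"
    and "corner_dart rot c = corner_dart rot c'"
  shows "c = c'"
  using assms unfolding rotation_system_def is_corner_def corner_dart_def
  by (auto simp: nth_eq_iff_index_eq prod_eq_iff)

lemma corner_dart_nxt:
  assumes rs: "rotation_system rot" and c: "is_corner rot c"
  shows "is_corner rot (nxt rot c)"
    and "corner_dart rot (nxt rot c) = face_succ rot (corner_dart rot c)"
proof -
  obtain v i where vi: "c = (v, i)" by (cases c)
  define b where "b = rot v ! (Suc i mod length (rot v))"
  have i: "i < length (rot v)" using c vi unfolding is_corner_def by simp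
  then have "Suc i mod length (rot v) < length (rot v)"
    using mod_less_divisor[of "length (rot v)" "Suc i"] by linarith
  then have "b \<in> set (rot v)" unfolding b_def by (rule nth_mem)
  then have v: "v \<in> set (rot b)" using rs unfolding rotation_system_def by blast
  have nxt: "nxt rot c = (b, idx (rot b) v)" unfolding nxt_def vi b_def Let_def by simp
  show "is_corner rot (nxt rot c)" using nxt idx_less_length[OF v] unfolding is_corner_def by simp
  have "idx (rot v) (rot v ! i) = i" using idx_nth rs i unfolding rotation_system_def by blast
  then show "corner_dart rot (nxt rot c) = face_succ rot (corner_dart rot c)"
    using nxt nth_idx[OF v]
    unfolding corner_dart_def face_succ_def cyc_succ_def vi b_def by simp
qed

lemma corner_dart_funpow_nxt:
  assumes "rotation_system rot" "is_corner rot c"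
  shows "is_corner rot ((nxt rot ^^ n) c) \<and>
    corner_dart rot ((nxt rot ^^ n) c) = (face_succ rot ^^ n) (corner_dart rot c)"
proof (induction n)
  case (Suc n)
  then show ?case using corner_dart_nxt[OF assms(1), of "(nxt rot ^^ n) c"] by simp
qed (simp add: assms(2))

section \<open>Refinement of faces\<close>

definition faces_refine :: "('v \<Rightarrow> 'v list) \<Rightarrow> ('v \<Rightarrow> 'v list) \<Rightarrow> bool" where
  "faces_refine rot' rot \<longleftrightarrow>
     (\<forall>z\<in>darts rot. orbit (face_succ rot') z \<inter> darts rot \<subseteq> orbit (face_succ rot) z)"

definition parent_face :: "('v \<Rightarrow> 'v list) \<Rightarrow> ('v \<times> 'v) set \<Rightarrow> ('v \<times> 'v) set" where
  "parent_face rot F = \<Union> (orbit (face_succ rot) ` (F \<inter> darts rot))"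

lemma parent_face_eq:
  assumes rs': "rotation_system rot'"
    and refines: "faces_refine rot' rot"
    and z': "z' \<in> darts rot'" and u: "u \<in> orbit (face_succ rot') z' \<inter> darts rot"
  shows "parent_face rot (orbit (face_succ rot') z') = orbit (face_succ rot) u"
proof -
  have "orbit (face_succ rot') z' = orbit (face_succ rot') u"
    using face_orbit_sym[OF rs' z', of u] u by simp
  then have sub: "orbit (face_succ rot') z' \<inter> darts rot \<subseteq> orbit (face_succ rot) u"
    using refines u unfolding faces_refine_def by simp
  show ?thesis unfolding parent_face_def
  proof
    show "\<Union> (orbit (face_succ rot) ` (orbit (face_succ rot') z' \<inter> darts rot))
        \<subseteq> orbit (face_succ rot) u"
    proof (rule UN_least)
      fix w assume "w \<in> orbit (face_succ rot') z' \<inter> darts rot"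
      then have "w \<in> orbit (face_succ rot) u" using sub by blast
      then show "orbit (face_succ rot) w \<subseteq> orbit (face_succ rot) u" by (rule orbit_trans)
    qed
    show "orbit (face_succ rot) u
        \<subseteq> \<Union> (orbit (face_succ rot) ` (orbit (face_succ rot') z' \<inter> darts rot))"
      using u by (rule UN_upper)
  qed
qed

lemma faces_at_subset_parent_faces:
  assumes rs': "rotation_system rot'"
    and refines: "faces_refine rot' rot"
    and grow: "set (rot v) \<subseteq> set (rot' v)"
  shows "orbit (face_succ rot) ` darts_at rot v
    \<subseteq> parent_face rot ` orbit (face_succ rot') ` darts_at rot' v"
proof
  fix F assume "F \<in> orbit (face_succ rot) ` darts_at rot v"
  then obtain z where z: "z \<in> darts_at rot v" "F = orbit (face_succ rot) z" by blast
  have z': "z \<in> darts_at rot' v" using z(1) grow unfolding darts_at_def by auto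
  have "z \<in> darts rot" using z(1) darts_at_subset_darts[of rot v] by blast
  have "z \<in> darts rot'" using z' darts_at_subset_darts[of rot' v] by blast
  have "z \<in> orbit (face_succ rot') z \<inter> darts rot"
    using \<open>z \<in> darts rot\<close> by (simp add: self_in_orbit)
  then have "parent_face rot (orbit (face_succ rot') z) = F"
    using parent_face_eq[OF rs' refines \<open>z \<in> darts rot'\<close>] z(2) by simp
  then show "F \<in> parent_face rot ` orbit (face_succ rot') ` darts_at rot' v" using z' by blast
qed

lemma face_count_mono:
  assumes "rotation_system rot'"
    and "faces_refine rot' rot"
    and "set (rot v) \<subseteq> set (rot' v)"
  shows "face_count rot v \<le> face_count rot' v"
proof -
  let ?B = "orbit (face_succ rot') ` darts_at rot' v"
  have fin: "finite ?B" by (simp add: darts_at_def)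
  have "face_count rot v \<le> card (parent_face rot ` ?B)"
    using faces_at_subset_parent_faces[OF assms] fin unfolding face_count_def
    by (simp add: card_mono)
  also have "\<dots> \<le> card ?B" using fin by (rule card_image_le)
  finally show ?thesis unfolding face_count_def .
qed

lemma face_count_less:
  assumes rs: "rotation_system rot" and rs': "rotation_system rot'"
    and refines: "faces_refine rot' rot"
    and grow: "set (rot v) \<subseteq> set (rot' v)"
    and z: "z1 \<in> darts_at rot' v" "z2 \<in> darts_at rot' v"
    and split: "orbit (face_succ rot') z1 \<noteq> orbit (face_succ rot') z2"
    and u: "u1 \<in> orbit (face_succ rot') z1 \<inter> darts rot" "u2 \<in> orbit (face_succ rot') z2 \<inter> darts rot"
    and same: "u2 \<in> orbit (face_succ rot) u1"
  shows "face_count rot v < face_count rot' v"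
proof -
  let ?B = "orbit (face_succ rot') ` darts_at rot' v"
  have fin: "finite ?B" by (simp add: darts_at_def)
  have zd: "z1 \<in> darts rot'" "z2 \<in> darts rot'"
    using z darts_at_subset_darts[of rot' v] by auto
  have "orbit (face_succ rot) u2 = orbit (face_succ rot) u1"
    using face_orbit_sym[OF rs _ same] u(1) by simp
  then have "parent_face rot (orbit (face_succ rot') z1) =
      parent_face rot (orbit (face_succ rot') z2)"
    using parent_face_eq[OF rs' refines zd(1) u(1)] parent_face_eq[OF rs' refines zd(2) u(2)]
    by simp
  then have "\<not> inj_on (parent_face rot) ?B" using z split unfolding inj_on_def by blast
  then have "card (parent_face rot ` ?B) < card ?B"
    using inj_on_iff_eq_card[OF fin, of "parent_face rot"]
      card_image_le[OF fin, of "parent_face rot"]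
    by linarith
  moreover have "face_count rot v \<le> card (parent_face rot ` ?B)"
    using faces_at_subset_parent_faces[OF rs' refines grow] fin
    unfolding face_count_def by (simp add: card_mono)
  ultimately show ?thesis unfolding face_count_def by simp
qed

section \<open>Inserting an edge\<close>

definition ins_dart :: "('v \<Rightarrow> 'v list) \<Rightarrow> 'v \<Rightarrow> nat \<Rightarrow> 'v \<times> 'v" where
  "ins_dart rot v k = corner_dart rot (ins_corner rot v k)"

lemma fst_ins_dart [simp]: "fst (ins_dart rot v k) = v"
  by (simp add: ins_dart_def corner_dart_def ins_corner_def)

lemma is_corner_ins_corner: "rot v \<noteq> [] \<Longrightarrow> is_corner rot (ins_corner rot v k)"
  by (simp add: is_corner_def ins_corner_def)

lemma ins_dart_in_darts_at: "rot v \<noteq> [] \<Longrightarrow> ins_dart rot v k \<in> darts_at rot v"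
  using corner_dart_in_darts_at[OF is_corner_ins_corner] unfolding ins_dart_def ins_corner_def
  by (metis fst_conv)

lemma ins_dart_in_darts_iff: "ins_dart rot v k \<in> darts rot \<longleftrightarrow> rot v \<noteq> []"
proof
  show "rot v \<noteq> [] \<Longrightarrow> ins_dart rot v k \<in> darts rot"
    using ins_dart_in_darts_at[of rot v k] darts_at_subset_darts[of rot v] by auto
  show "ins_dart rot v k \<in> darts rot \<Longrightarrow> rot v \<noteq> []"
    using fst_ins_dart[of rot v k] by (cases "ins_dart rot v k") (auto simp: darts_def)
qed

lemma set_upd_mono: "p \<noteq> q \<Longrightarrow> set (rot u) \<subseteq> set (upd rot (p, q, i, j) u)"
  by (auto simp: set_ins)

lemma upd_swap: "p \<noteq> q \<Longrightarrow> upd rot (q, p, j, i) = upd rot (p, q, i, j)"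
  by (simp add: fun_upd_twist)

lemma face_succ_upd_other:
  "u \<noteq> p \<Longrightarrow> u \<noteq> q \<Longrightarrow> face_succ (upd rot (p, q, i, j)) (u, c) = face_succ rot (u, c)"
  by (simp add: face_succ_def)

lemma face_succ_upd_source:
  assumes "distinct (rot p)" "q \<notin> set (rot p)" "i \<le> length (rot p)" "p \<noteq> q"
  shows "c \<in> set (rot p) \<Longrightarrow> face_succ (upd rot (p, q, i, j)) (p, c) =
           (if (p, c) = ins_dart rot p i then (q, p) else face_succ rot (p, c))"
    and "face_succ (upd rot (p, q, i, j)) (p, q) =
           (if rot p = [] then (q, p) else face_succ rot (ins_dart rot p i))"
proof -
  define a where "a = rot p ! ((i + length (rot p) - 1) mod length (rot p))"
  have x: "ins_dart rot p i = (p, a)"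
    unfolding ins_dart_def corner_dart_def ins_corner_def a_def by simp
  have upd: "face_succ (upd rot (p, q, i, j)) (p, c) = (cyc_succ (ins i q (rot p)) c, p)" for c
    using assms(4) by (simp add: face_succ_def)
  show "face_succ (upd rot (p, q, i, j)) (p, c) =
           (if (p, c) = ins_dart rot p i then (q, p) else face_succ rot (p, c))"
    if "c \<in> set (rot p)"
  proof -
    have "rot p \<noteq> []" using that by auto
    then show ?thesis using cyc_succ_ins(1)[OF assms(1,2) _ assms(3) a_def that] x upd
      by (simp add: face_succ_def)
  qed
  show "face_succ (upd rot (p, q, i, j)) (p, q) =
           (if rot p = [] then (q, p) else face_succ rot (ins_dart rot p i))"
    using cyc_succ_ins(2)[OF assms(1,2) _ assms(3) a_def] x upd
    by (auto simp: face_succ_def ins_def cyc_succ_def idx_def)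
qed

lemma face_succ_upd:
  assumes rs: "rotation_system rot" and pq: "p \<noteq> q" and qp: "q \<notin> set (rot p)"
    and i: "i \<le> length (rot p)" and j: "j \<le> length (rot q)"
  shows "z \<in> darts rot \<Longrightarrow> z \<noteq> ins_dart rot p i \<Longrightarrow> z \<noteq> ins_dart rot q j \<Longrightarrow>
      face_succ (upd rot (p, q, i, j)) z = face_succ rot z"
    and "ins_dart rot p i \<in> darts rot \<Longrightarrow>
      face_succ (upd rot (p, q, i, j)) (ins_dart rot p i) = (q, p)"
    and "ins_dart rot q j \<in> darts rot \<Longrightarrow>
      face_succ (upd rot (p, q, i, j)) (ins_dart rot q j) = (p, q)"
    and "face_succ (upd rot (p, q, i, j)) (p, q) =
      (if rot p = [] then (q, p) else face_succ rot (ins_dart rot p i))"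
    and "face_succ (upd rot (p, q, i, j)) (q, p) =
      (if rot q = [] then (p, q) else face_succ rot (ins_dart rot q j))"
proof -
  have dist: "distinct (rot p)" "distinct (rot q)" using rs unfolding rotation_system_def by auto
  note src = face_succ_upd_source[where rot = rot and p = p and q = q and j = j, OF dist(1) qp i pq]
  note tgt = face_succ_upd_source[where rot = rot and p = q and q = p and j = i,
      OF dist(2) rotation_system_not_adjacent[OF rs qp] j pq[symmetric], unfolded upd_swap[OF pq]]
  have in_darts: "(v, c) \<in> darts rot \<longleftrightarrow> c \<in> set (rot v)" for v c
    by (simp add: darts_def)
  have ins_dart_eq: "ins_dart rot v k = (v, snd (ins_dart rot v k))" for v k
    by (metis fst_ins_dart prod.collapse)
  show "face_succ (upd rot (p, q, i, j)) z = face_succ rot z"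
    if "z \<in> darts rot" "z \<noteq> ins_dart rot p i" "z \<noteq> ins_dart rot q j"
  proof -
    obtain v c where z: "z = (v, c)" by (cases z)
    have c: "c \<in> set (rot v)" using that z by (simp add: in_darts)
    consider "v = p" | "v = q" | "v \<noteq> p" "v \<noteq> q" by blast
    then show ?thesis
    proof cases
      case 1 then show ?thesis using that src(1)[of c] c z by auto
    next
      case 2 then show ?thesis using that tgt(1)[of c] c z by auto
    next
      case 3 then show ?thesis using face_succ_upd_other[OF 3] z by simp
    qed
  qed
  show "face_succ (upd rot (p, q, i, j)) (ins_dart rot p i) = (q, p)"
    if "ins_dart rot p i \<in> darts rot"
    using that src(1)[of "snd (ins_dart rot p i)"] ins_dart_eq[of p i] in_darts by metis
  show "face_succ (upd rot (p, q, i, j)) (ins_dart rot q j) = (p, q)"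
    if "ins_dart rot q j \<in> darts rot"
    using that tgt(1)[of "snd (ins_dart rot q j)"] ins_dart_eq[of q j] in_darts by metis
  show "face_succ (upd rot (p, q, i, j)) (p, q) =
      (if rot p = [] then (q, p) else face_succ rot (ins_dart rot p i))" by (rule src(2))
  show "face_succ (upd rot (p, q, i, j)) (q, p) =
      (if rot q = [] then (p, q) else face_succ rot (ins_dart rot q j))" by (rule tgt(2))
qed

lemma faces_refine_upd:
  assumes rs: "rotation_system rot" and pq: "p \<noteq> q" and qp: "q \<notin> set (rot p)"
    and i: "i \<le> length (rot p)" and j: "j \<le> length (rot q)"
    and same_face: "ins_dart rot p i \<in> darts rot \<Longrightarrow> ins_dart rot q j \<in> darts rot \<Longrightarrow>
      ins_dart rot q j \<in> orbit (face_succ rot) (ins_dart rot p i)"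
  shows "faces_refine (upd rot (p, q, i, j)) rot"
  unfolding faces_refine_def
proof
  fix z assume z: "z \<in> darts rot"
  let ?f = "face_succ rot" and ?g = "face_succ (upd rot (p, q, i, j))"
  let ?x = "ins_dart rot p i" and ?y = "ins_dart rot q j"
  let ?E = "{?x, ?y} \<inter> darts rot" and ?N = "{(p, q), (q, p)}"
  note g = face_succ_upd[OF rs pq qp i j]
  show "orbit ?g z \<inter> darts rot \<subseteq> orbit ?f z"
  proof (rule orbit_inter_subset_orbit[where E = ?E and N = ?N])
    show "?f ` darts rot \<subseteq> darts rot" using face_succ_darts[OF rs] .
    show "?N \<inter> darts rot = {}"
      using qp rotation_system_not_adjacent[OF rs qp] by (simp add: darts_def)
    show "?g u = ?f u" if "u \<in> darts rot - ?E" for u using that g(1) by blast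
    show "?g ` ?E \<subseteq> ?N" using g(2,3) by auto
    have "?g (p, q) \<in> ?N \<union> ?f ` ?E"
      using g(4) ins_dart_in_darts_iff[of rot p i] by (cases "rot p = []") auto
    moreover have "?g (q, p) \<in> ?N \<union> ?f ` ?E"
      using g(5) ins_dart_in_darts_iff[of rot q j] by (cases "rot q = []") auto
    ultimately show "?g ` ?N \<subseteq> ?N \<union> ?f ` ?E" by simp
    show "e' \<in> orbit ?f e" if "e \<in> ?E" "e' \<in> ?E" for e e'
    proof -
      have "?y \<in> orbit ?f ?x" "?x \<in> orbit ?f ?y" if "?x \<in> darts rot" "?y \<in> darts rot"
        using same_face[OF that] face_orbit_sym[OF rs that(1) same_face[OF that]] self_in_orbit
        by auto
      then show ?thesis using \<open>e \<in> ?E\<close> \<open>e' \<in> ?E\<close> self_in_orbit by auto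
    qed
  qed (fact z)
qed

text \<open>dart_p and dart_q are the darts whose corners receive the new edge; they lie on one face,
  m steps apart. The edge cuts off the darts after dart_p up to dart_q, which together with the
  new dart (p, q) form cut_face.\<close>
locale face_cut =
  fixes rot :: "'v \<Rightarrow> 'v list" and p q :: 'v and i j m k :: nat
  assumes rs: "rotation_system rot" and rs': "rotation_system (upd rot (p, q, i, j))"
    and pq: "p \<noteq> q" and qp: "q \<notin> set (rot p)" and ne: "rot p \<noteq> []" "rot q \<noteq> []"
    and i: "i \<le> length (rot p)" and j: "j \<le> length (rot q)"
    and m: "0 < m" "m < k" "(face_succ rot ^^ m) (ins_dart rot p i) = ins_dart rot q j"
    and no_return: "\<forall>n. 0 < n \<and> n < k \<longrightarrow> (face_succ rot ^^ n) (ins_dart rot p i) \<noteq> ins_dart rot p i"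
begin

abbreviation "dart_p \<equiv> ins_dart rot p i"
abbreviation "dart_q \<equiv> ins_dart rot q j"
abbreviation "cut_face \<equiv> insert (p, q) ((\<lambda>n. (face_succ rot ^^ n) dart_p) ` {0<..m})"

lemma funpow_dart_p_in_darts: "(face_succ rot ^^ n) dart_p \<in> darts rot"
proof -
  have "dart_p \<in> darts rot" using ins_dart_in_darts_iff[of rot p i] ne by simp
  then show ?thesis using funpow_in_invariant[OF face_succ_darts[OF rs]] by blast
qed

lemma dart_p_in_darts: "dart_p \<in> darts rot"
  using funpow_dart_p_in_darts[of 0] by simp

lemma dart_q_in_darts: "dart_q \<in> darts rot"
  using funpow_dart_p_in_darts[of m] m(3) by simp

lemma new_darts_notin_darts: "(p, q) \<notin> darts rot" "(q, p) \<notin> darts rot"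
  using qp rotation_system_not_adjacent[OF rs qp] by (auto simp: darts_def)

lemma funpow_dart_p_distinct:
  "a < b \<Longrightarrow> b < k \<Longrightarrow> (face_succ rot ^^ a) dart_p \<noteq> (face_succ rot ^^ b) dart_p"
  using funpow_distinct_before_return[OF face_succ_darts[OF rs] inj_on_face_succ[OF rs]
      dart_p_in_darts no_return] .

lemma upd_faces_refine: "faces_refine (upd rot (p, q, i, j)) rot"
  using faces_refine_upd[OF rs pq qp i j] funpow_in_orbit[of m "face_succ rot" dart_p] m(3) by simp

lemma cut_face_separates:
  assumes "b \<in> cut_face" "c \<notin> cut_face"
  shows "orbit (face_succ (upd rot (p, q, i, j))) b \<noteq> orbit (face_succ (upd rot (p, q, i, j))) c"
proof -
  let ?f = "face_succ rot" and ?g = "face_succ (upd rot (p, q, i, j))"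
  note g = face_succ_upd[OF rs pq qp i j]
  have "?g ` cut_face \<subseteq> cut_face"
  proof
    fix w assume "w \<in> ?g ` cut_face"
    then obtain u where u: "u \<in> cut_face" "w = ?g u" by blast
    show "w \<in> cut_face"
    proof (cases "u = (p, q)")
      case True
      then have "w = (?f ^^ 1) dart_p" using u(2) g(4) ne by simp
      then show ?thesis using m(1) by force
    next
      case False
      then obtain n where n: "0 < n" "n \<le> m" "u = (?f ^^ n) dart_p" using u(1) by auto
      show ?thesis
      proof (cases "n = m")
        case True
        then show ?thesis using u n m(3) g(3)[OF dart_q_in_darts] by simp
      next
        case False
        have "u \<noteq> dart_p" using no_return n m(2) by auto
        moreover have "u \<noteq> dart_q" using funpow_dart_p_distinct[of n m] n False m by auto
        ultimately have "w = (?f ^^ Suc n) dart_p"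
          using g(1) funpow_dart_p_in_darts u(2) n(3) by simp
        moreover have "Suc n \<in> {0<..m}" using n False by simp
        ultimately show ?thesis by blast
      qed
    qed
  qed
  then have "orbit ?g b \<subseteq> cut_face" using orbit_subset_invariant \<open>b \<in> cut_face\<close> by metis
  then show ?thesis using \<open>c \<notin> cut_face\<close> self_in_orbit[of c ?g] by blast
qed

lemma old_dart_in_new_darts_at: "z \<in> darts rot \<Longrightarrow> z \<in> darts_at (upd rot (p, q, i, j)) (fst z)"
  using darts_at_fst darts_at_mono[of rot "fst z" "upd rot (p, q, i, j)", OF set_upd_mono[OF pq]]
  by blast

lemmas face_count_less_upd = face_count_less[OF rs rs' upd_faces_refine set_upd_mono[OF pq]]

lemma face_count_less_source: "face_count rot p < face_count (upd rot (p, q, i, j)) p"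
proof -
  let ?f = "face_succ rot" and ?g = "face_succ (upd rot (p, q, i, j))"
  have "dart_p \<notin> cut_face"
  proof
    assume "dart_p \<in> cut_face"
    moreover have "dart_p \<noteq> (p, q)" using dart_p_in_darts new_darts_notin_darts(1) by metis
    ultimately obtain n where "n \<in> {0<..m}" "dart_p = (?f ^^ n) dart_p" by auto
    then have "0 < n \<and> n < k" "(?f ^^ n) dart_p = dart_p" using m(2) by auto
    then show False using no_return by blast
  qed
  then have split: "orbit ?g (p, q) \<noteq> orbit ?g dart_p" using cut_face_separates by simp
  have "?g (p, q) = ?f dart_p" using face_succ_upd(4)[OF rs pq qp i j] ne(1) by simp
  moreover have "?f dart_p \<in> darts rot" using funpow_dart_p_in_darts[of 1] by simp
  ultimately have u1: "?f dart_p \<in> orbit ?g (p, q) \<inter> darts rot"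
    using orbit_step[OF self_in_orbit, of ?g "(p, q)"] by simp
  have u2: "dart_p \<in> orbit ?g dart_p \<inter> darts rot" using dart_p_in_darts self_in_orbit by simp
  have "orbit ?f (?f dart_p) = orbit ?f dart_p"
    by (rule face_orbit_sym[OF rs dart_p_in_darts orbit_step[OF self_in_orbit]])
  then have same: "dart_p \<in> orbit ?f (?f dart_p)" using self_in_orbit by simp
  have z1: "(p, q) \<in> darts_at (upd rot (p, q, i, j)) p" by (simp add: darts_at_def set_ins)
  have z2: "dart_p \<in> darts_at (upd rot (p, q, i, j)) p"
    using old_dart_in_new_darts_at[OF dart_p_in_darts] by simp
  show ?thesis by (rule face_count_less_upd[OF z1 z2 split u1 u2 same])
qed

lemma face_count_less_target: "face_count rot q < face_count (upd rot (p, q, i, j)) q"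
proof -
  let ?f = "face_succ rot" and ?g = "face_succ (upd rot (p, q, i, j))"
  have "dart_q \<in> cut_face" using m(1,3) by force
  moreover have "(q, p) \<notin> cut_face"
  proof
    assume "(q, p) \<in> cut_face"
    then obtain n where "(q, p) = (?f ^^ n) dart_p" using pq by auto
    then show False using funpow_dart_p_in_darts[of n] new_darts_notin_darts(2) by simp
  qed
  ultimately have split: "orbit ?g dart_q \<noteq> orbit ?g (q, p)" by (rule cut_face_separates)
  have u1: "dart_q \<in> orbit ?g dart_q \<inter> darts rot" using dart_q_in_darts self_in_orbit by simp
  have "?g (q, p) = ?f dart_q" using face_succ_upd(5)[OF rs pq qp i j] ne(2) by simp
  moreover have "?f dart_q \<in> darts rot" using face_succ_darts[OF rs] dart_q_in_darts by blast
  ultimately have u2: "?f dart_q \<in> orbit ?g (q, p) \<inter> darts rot"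
    using orbit_step[OF self_in_orbit, of ?g "(q, p)"] by simp
  have same: "?f dart_q \<in> orbit ?f dart_q" using orbit_step[OF self_in_orbit] .
  have z1: "dart_q \<in> darts_at (upd rot (p, q, i, j)) q"
    using old_dart_in_new_darts_at[OF dart_q_in_darts] by simp
  have z2: "(q, p) \<in> darts_at (upd rot (p, q, i, j)) q" using pq by (simp add: darts_at_def set_ins)
  show ?thesis by (rule face_count_less_upd[OF z1 z2 split u1 u2 same])
qed

lemma face_count_less_both_sides:
  assumes "n1 \<in> {0<..<m}" "n2 \<in> {m<..<k}"
    and "fst ((face_succ rot ^^ n1) dart_p) = v" "fst ((face_succ rot ^^ n2) dart_p) = v"
  shows "face_count rot v < face_count (upd rot (p, q, i, j)) v"
proof -
  let ?f = "face_succ rot" and ?g = "face_succ (upd rot (p, q, i, j))"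
  have "(?f ^^ n1) dart_p \<in> cut_face" using assms(1) m by auto
  moreover have "(?f ^^ n2) dart_p \<notin> cut_face"
  proof
    assume "(?f ^^ n2) dart_p \<in> cut_face"
    moreover have "(?f ^^ n2) dart_p \<noteq> (p, q)"
      using funpow_dart_p_in_darts new_darts_notin_darts(1) by metis
    ultimately obtain n where "n \<in> {0<..m}" "(?f ^^ n2) dart_p = (?f ^^ n) dart_p" by auto
    moreover have "n < n2" "n2 < k" using assms(2) \<open>n \<in> {0<..m}\<close> by auto
    ultimately show False using funpow_dart_p_distinct[of n n2] by auto
  qed
  ultimately have split: "orbit ?g ((?f ^^ n1) dart_p) \<noteq> orbit ?g ((?f ^^ n2) dart_p)"
    by (rule cut_face_separates)
  have u: "(?f ^^ n) dart_p \<in> orbit ?g ((?f ^^ n) dart_p) \<inter> darts rot" for n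
    using funpow_dart_p_in_darts self_in_orbit by simp
  have "n1 \<le> n2" using assms(1,2) by simp
  then have "(?f ^^ n2) dart_p = (?f ^^ (n2 - n1)) ((?f ^^ n1) dart_p)"
    by (metis funpow_add le_add_diff_inverse2 o_apply)
  then have same: "(?f ^^ n2) dart_p \<in> orbit ?f ((?f ^^ n1) dart_p)" using funpow_in_orbit by metis
  have z: "(?f ^^ n1) dart_p \<in> darts_at (upd rot (p, q, i, j)) v"
    "(?f ^^ n2) dart_p \<in> darts_at (upd rot (p, q, i, j)) v"
    using old_dart_in_new_darts_at[OF funpow_dart_p_in_darts[of n1]]
      old_dart_in_new_darts_at[OF funpow_dart_p_in_darts[of n2]] assms(3,4) by simp_all
  show ?thesis by (rule face_count_less_upd[OF z split u u same])
qed

end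

section \<open>The drawing algorithm\<close>

lemma enclosed_side_walk:
  assumes "enclosed_side rot C (p, q, i, j) X"
  obtains m k where "0 < m" "m < k"
    "(nxt rot ^^ m) (ins_corner rot p i) = ins_corner rot q j"
    "\<forall>n. 0 < n \<and> n < k \<longrightarrow> (nxt rot ^^ n) (ins_corner rot p i) \<noteq> ins_corner rot p i"
    "\<forall>v\<in>moved rot C X - {p, q}. \<exists>n1\<in>{0<..<m}. \<exists>n2\<in>{m<..<k}.
       fst ((nxt rot ^^ n1) (ins_corner rot p i)) = v \<and>
       fst ((nxt rot ^^ n2) (ins_corner rot p i)) = v"
proof -
  define w where "w n = (nxt rot ^^ n) (ins_corner rot p i)" for n
  define outer where "outer k \<longleftrightarrow> (\<exists>v l. is_outc rot C v l \<and> (v, l) \<in> w ` {0..<k})" for k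
  obtain m k where mk: "0 < m" "m < k" "w m = ins_corner rot q j"
    "\<forall>n. 0 < n \<and> n < k \<longrightarrow> w n \<noteq> ins_corner rot p i"
    and sides: "(X = w ` {0<..<m} \<and> (outer k \<longrightarrow> fst ` w ` {m<..<k} \<union> {p, q} = set C)) \<or>
        (X = w ` {m<..<k} \<and> (outer k \<longrightarrow> fst ` w ` {0<..<m} \<union> {p, q} = set C))"
    using assms unfolding enclosed_side_def Let_def w_def outer_def by auto
  have "\<exists>n1\<in>{0<..<m}. \<exists>n2\<in>{m<..<k}. fst (w n1) = v \<and> fst (w n2) = v"
    if v: "v \<in> moved rot C X - {p, q}" for v
  proof -
    obtain l where l: "is_outc rot C v l" "(v, l) \<in> X" "v \<in> set C" "v \<noteq> p" "v \<noteq> q"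
      using v unfolding moved_def by blast
    \<comment> \<open>the outer corner of v lies on the cut face, so outerplanarity covers both sides\<close>
    have "X \<subseteq> w ` {0..<k}" using sides mk(2) by auto
    then have "outer k" unfolding outer_def using l(1,2) by blast
    from sides show ?thesis
    proof
      assume "X = w ` {0<..<m} \<and> (outer k \<longrightarrow> fst ` w ` {m<..<k} \<union> {p, q} = set C)"
      then have "(v, l) \<in> w ` {0<..<m}" "v \<in> fst ` w ` {m<..<k}"
        using \<open>outer k\<close> l by auto
      then obtain n1 n2 where "n1 \<in> {0<..<m}" "(v, l) = w n1" "n2 \<in> {m<..<k}" "v = fst (w n2)"
        by blast
      then show ?thesis by (metis fst_conv)
    next
      assume "X = w ` {m<..<k} \<and> (outer k \<longrightarrow> fst ` w ` {0<..<m} \<union> {p, q} = set C)"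
      then have "(v, l) \<in> w ` {m<..<k}" "v \<in> fst ` w ` {0<..<m}"
        using \<open>outer k\<close> l by auto
      then obtain n1 n2 where "n2 \<in> {m<..<k}" "(v, l) = w n2" "n1 \<in> {0<..<m}" "v = fst (w n1)"
        by blast
      then show ?thesis by (metis fst_conv)
    qed
  qed
  then show ?thesis using that mk unfolding w_def by blast
qed

lemma enclosed_side_dart_walk:
  assumes rs: "rotation_system rot" and ne: "rot p \<noteq> []"
    and es: "enclosed_side rot C (p, q, i, j) X"
  obtains m k where "0 < m" "m < k"
    "(face_succ rot ^^ m) (ins_dart rot p i) = ins_dart rot q j"
    "\<forall>n. 0 < n \<and> n < k \<longrightarrow> (face_succ rot ^^ n) (ins_dart rot p i) \<noteq> ins_dart rot p i"
    "\<forall>v\<in>moved rot C X - {p, q}. \<exists>n1\<in>{0<..<m}. \<exists>n2\<in>{m<..<k}.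
       fst ((face_succ rot ^^ n1) (ins_dart rot p i)) = v \<and>
       fst ((face_succ rot ^^ n2) (ins_dart rot p i)) = v"
proof -
  let ?c = "ins_corner rot p i"
  obtain m k where mk: "0 < m" "m < k" "(nxt rot ^^ m) ?c = ins_corner rot q j"
    and no_return: "\<forall>n. 0 < n \<and> n < k \<longrightarrow> (nxt rot ^^ n) ?c \<noteq> ?c"
    and both: "\<forall>v\<in>moved rot C X - {p, q}. \<exists>n1\<in>{0<..<m}. \<exists>n2\<in>{m<..<k}.
       fst ((nxt rot ^^ n1) ?c) = v \<and> fst ((nxt rot ^^ n2) ?c) = v"
    using enclosed_side_walk[OF es] by blast
  have c: "is_corner rot ?c" using is_corner_ins_corner[of rot p i, OF ne] .
  have dart: "(face_succ rot ^^ n) (ins_dart rot p i) = corner_dart rot ((nxt rot ^^ n) ?c)" for n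
    using corner_dart_funpow_nxt[OF rs c, of n] unfolding ins_dart_def by simp
  have fst_dart: "fst ((face_succ rot ^^ n) (ins_dart rot p i)) = fst ((nxt rot ^^ n) ?c)" for n
    unfolding dart by (simp add: corner_dart_def)
  show ?thesis
  proof (rule that[OF mk(1,2)])
    show "(face_succ rot ^^ m) (ins_dart rot p i) = ins_dart rot q j"
      using dart[of m] mk(3) by (simp add: ins_dart_def)
    show "\<forall>n. 0 < n \<and> n < k \<longrightarrow> (face_succ rot ^^ n) (ins_dart rot p i) \<noteq> ins_dart rot p i"
    proof (intro allI impI notI)
      fix n assume n: "0 < n \<and> n < k"
        and "(face_succ rot ^^ n) (ins_dart rot p i) = ins_dart rot p i"
      then have "corner_dart rot ((nxt rot ^^ n) ?c) = corner_dart rot ?c"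
        using dart[of n] by (simp add: ins_dart_def)
      then have "(nxt rot ^^ n) ?c = ?c"
        using corner_dart_inj[OF rs _ c] corner_dart_funpow_nxt[OF rs c, of n] by blast
      then show False using no_return n by blast
    qed
    show "\<forall>v\<in>moved rot C X - {p, q}. \<exists>n1\<in>{0<..<m}. \<exists>n2\<in>{m<..<k}.
       fst ((face_succ rot ^^ n1) (ins_dart rot p i)) = v \<and>
       fst ((face_succ rot ^^ n2) (ins_dart rot p i)) = v"
      using both unfolding fst_dart .
  qed
qed

lemma alg_step_moved:
  assumes "alg_step rot C (p, q, i, j) C' M"
  shows "M \<subseteq> {v \<in> set C. rot v \<noteq> []}"
proof (cases "q \<in> set C")
  case True
  then obtain X where "M = moved rot C X" using assms by auto
  then show ?thesis unfolding moved_def is_outc_def by auto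
qed (use assms in simp)

lemma alg_step_vertices:
  assumes step: "alg_step rot C (p, q, i, j) C' M" and pq: "p \<noteq> q"
  shows "set C' = insert q (set C)"
proof (cases "q \<in> set C")
  case True
  let ?rot' = "upd rot (p, q, i, j)"
  have M: "M \<subseteq> {v \<in> set C. rot v \<noteq> []}" using alg_step_moved[OF step] .
  obtain r where "rotate r (filter (\<lambda>v. v \<notin> M) C) = filter (\<lambda>v. v \<notin> M) C'"
    using step True by (auto simp: cyc_eq_def)
  then have "set (filter (\<lambda>v. v \<notin> M) C) = set (filter (\<lambda>v. v \<notin> M) C')"
    using set_rotate by metis
  then have "set C - M = set C' - M" by (simp add: set_diff_eq)
  moreover have "M \<subseteq> set C'"
  proof
    fix u assume "u \<in> M"
    then have "rot u \<noteq> []" using M by blast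
    then have "?rot' u \<noteq> []" using set_upd_mono[OF pq, of rot u i j] by (auto simp del: upd.simps)
    moreover have "circ_valid ?rot' C'" using step by simp
    ultimately show "u \<in> set C'" unfolding circ_valid_def by blast
  qed
  ultimately show ?thesis using True M by blast
qed (use step in \<open>auto simp: set_ins\<close>)

lemma alg_step_no_isolated:
  assumes step: "alg_step rot C (p, q, i, j) C' M" and pq: "p \<noteq> q" and pC: "p \<in> set C"
    and isolated: "\<forall>u\<in>set C. rot u = [] \<longrightarrow> set C = {u}"
  shows "\<forall>u\<in>set C'. upd rot (p, q, i, j) u \<noteq> []"
proof
  fix u assume u: "u \<in> set C'"
  show "upd rot (p, q, i, j) u \<noteq> []"
  proof (cases "u = p \<or> u = q")
    case True then show ?thesis using pq by (auto simp: ins_def)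
  next
    case False
    then have "rot u \<noteq> []" using isolated u alg_step_vertices[OF step pq] pC by auto
    then show ?thesis using set_upd_mono[OF pq, of rot u i j] by (auto simp del: upd.simps)
  qed
qed

lemma alg_step_face_cut:
  assumes step: "alg_step rot C (p, q, i, j) C' M" and ok: "ext_ok (set C) rot (p, q, i, j)"
    and cv: "circ_valid rot C" and isolated: "\<forall>u\<in>set C. rot u = [] \<longrightarrow> set C = {u}"
    and qC: "q \<in> set C"
  obtains m k where "face_cut rot p q i j m k"
    "\<forall>v\<in>M - {p, q}. \<exists>n1\<in>{0<..<m}. \<exists>n2\<in>{m<..<k}.
       fst ((face_succ rot ^^ n1) (ins_dart rot p i)) = v \<and>
       fst ((face_succ rot ^^ n2) (ins_dart rot p i)) = v"
proof -
  have pC: "p \<in> set C" and pq: "p \<noteq> q" and qp: "q \<notin> set (rot p)"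
    and i: "i \<le> length (rot p)" and j: "j \<le> length (rot q)" using ok by auto
  have rs: "rotation_system rot" using circ_valid_rotation_system[OF cv] .
  have "circ_valid (upd rot (p, q, i, j)) C'" using step by simp
  then have rs': "rotation_system (upd rot (p, q, i, j))" by (rule circ_valid_rotation_system)
  obtain X where X: "enclosed_side rot C (p, q, i, j) X" and M: "M = moved rot C X"
    using step qC by auto
  have ne: "rot p \<noteq> []" "rot q \<noteq> []" using isolated pC qC pq by auto
  obtain m k where m: "0 < m" "m < k"
    "(face_succ rot ^^ m) (ins_dart rot p i) = ins_dart rot q j"
    and no_return: "\<forall>n. 0 < n \<and> n < k \<longrightarrow> (face_succ rot ^^ n) (ins_dart rot p i) \<noteq> ins_dart rot p i"
    and both: "\<forall>v\<in>moved rot C X - {p, q}. \<exists>n1\<in>{0<..<m}. \<exists>n2\<in>{m<..<k}.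
       fst ((face_succ rot ^^ n1) (ins_dart rot p i)) = v \<and>
       fst ((face_succ rot ^^ n2) (ins_dart rot p i)) = v"
    by (rule enclosed_side_dart_walk[OF rs ne(1) X])
  have "face_cut rot p q i j m k"
    using rs rs' pq qp ne i j m no_return by (simp add: face_cut_def)
  then show ?thesis using that both M by blast
qed

lemma alg_step_face_count_mono:
  assumes step: "alg_step rot C (p, q, i, j) C' M" and ok: "ext_ok (set C) rot (p, q, i, j)"
    and cv: "circ_valid rot C" and isolated: "\<forall>u\<in>set C. rot u = [] \<longrightarrow> set C = {u}"
  shows "face_count rot v \<le> face_count (upd rot (p, q, i, j)) v"
proof -
  have pq: "p \<noteq> q" and qp: "q \<notin> set (rot p)"
    and i: "i \<le> length (rot p)" and j: "j \<le> length (rot q)" using ok by auto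
  have rs: "rotation_system rot" using circ_valid_rotation_system[OF cv] .
  have "circ_valid (upd rot (p, q, i, j)) C'" using step by simp
  then have rs': "rotation_system (upd rot (p, q, i, j))" by (rule circ_valid_rotation_system)
  have "faces_refine (upd rot (p, q, i, j)) rot"
  proof (cases "q \<in> set C")
    case True
    then obtain m k where "face_cut rot p q i j m k" by (rule alg_step_face_cut[OF assms])
    then show ?thesis by (rule face_cut.upd_faces_refine)
  next
    case False
    then have "rot q = []" using cv unfolding circ_valid_def by blast
    then have "ins_dart rot q j \<notin> darts rot" by (simp add: ins_dart_in_darts_iff)
    then show ?thesis using faces_refine_upd[OF rs pq qp i j] by blast
  qed
  then show ?thesis using face_count_mono[OF rs'] set_upd_mono[OF pq] by blast
qed

lemma alg_step_face_count_less:
  assumes step: "alg_step rot C (p, q, i, j) C' M" and ok: "ext_ok (set C) rot (p, q, i, j)"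
    and cv: "circ_valid rot C" and isolated: "\<forall>u\<in>set C. rot u = [] \<longrightarrow> set C = {u}"
    and v: "v \<in> M"
  shows "0 < face_count rot v" and "face_count rot v < face_count (upd rot (p, q, i, j)) v"
proof -
  have "rot v \<noteq> []" using alg_step_moved[OF step] v by blast
  then show "0 < face_count rot v" by (rule face_count_pos)
  have "q \<in> set C"
  proof (rule ccontr)
    assume "q \<notin> set C"
    then have "M = {}" using step by simp
    then show False using v by simp
  qed
  then obtain m k where cut: "face_cut rot p q i j m k"
    and both: "\<forall>v\<in>M - {p, q}. \<exists>n1\<in>{0<..<m}. \<exists>n2\<in>{m<..<k}.
       fst ((face_succ rot ^^ n1) (ins_dart rot p i)) = v \<and>
       fst ((face_succ rot ^^ n2) (ins_dart rot p i)) = v"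
    by (rule alg_step_face_cut[OF assms(1-4)])
  consider "v = p" | "v = q" | n1 n2 where "n1 \<in> {0<..<m}" "n2 \<in> {m<..<k}"
      "fst ((face_succ rot ^^ n1) (ins_dart rot p i)) = v"
      "fst ((face_succ rot ^^ n2) (ins_dart rot p i)) = v"
    using bspec[OF both, of v] v by blast
  then show "face_count rot v < face_count (upd rot (p, q, i, j)) v"
  proof cases
    case 1 then show ?thesis using face_cut.face_count_less_source[OF cut] by simp
  next
    case 2 then show ?thesis using face_cut.face_count_less_target[OF cut] by simp
  next
    case 3 then show ?thesis by (rule face_cut.face_count_less_both_sides[OF cut])
  qed
qed

text \<open>Invariant: every move of v is paid for by a face of v beyond the first.\<close>
lemma alg_run_face_count:
  assumes "alg_run rot C es rotf Cf Ms" and "stream_ok (set C) rot es" and "circ_valid rot C"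
    and "\<forall>u\<in>set C. rot u = [] \<longrightarrow> set C = {u}"
  shows "length (filter (\<lambda>M. v \<in> M) Ms) + (face_count rot v - 1) \<le> face_count rotf v - 1"
  using assms
proof (induction rule: alg_run.induct)
  case (run_Cons rot C e C' M es rot'' C'' Ms)
  obtain p q i j where e: "e = (p, q, i, j)" by (cases e)
  have ok: "ext_ok (set C) rot (p, q, i, j)"
    and sok: "stream_ok (insert q (set C)) (upd rot e) es" using run_Cons.prems(1) e by auto
  have step: "alg_step rot C (p, q, i, j) C' M" using run_Cons.hyps(1) e by simp
  have pC: "p \<in> set C" and pq: "p \<noteq> q" using ok by auto
  have "circ_valid (upd rot e) C'" using step e by simp
  moreover have "\<forall>u\<in>set C'. upd rot e u = [] \<longrightarrow> set C' = {u}"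
    using alg_step_no_isolated[OF step pq pC run_Cons.prems(3)] e by simp
  moreover have "stream_ok (set C') (upd rot e) es" using sok alg_step_vertices[OF step pq] by simp
  ultimately have IH: "length (filter (\<lambda>M. v \<in> M) Ms) + (face_count (upd rot e) v - 1)
      \<le> face_count rot'' v - 1"
    using run_Cons.IH by blast
  note mono = alg_step_face_count_mono[OF step ok run_Cons.prems(2,3), of v]
  note less = alg_step_face_count_less[OF step ok run_Cons.prems(2,3), of v]
  show ?case
  proof (cases "v \<in> M")
    case True
    then show ?thesis using IH less e by fastforce
  qed (use IH mono e in auto)
qed simp

theorem lemma4:
  fixes v0 v :: 'v and es :: "'v event list"
  assumes "stream_ok {v0} (\<lambda>_. []) es"
    and "alg_run (\<lambda>_. []) [v0] es rotf Cf Ms"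
  shows "length (filter (\<lambda>M. v \<in> M) Ms) \<le> length (rotf v) - 1"
proof -
  have "stream_ok (set [v0]) (\<lambda>_. []) es" using assms(1) by simp
  moreover have "circ_valid (\<lambda>_. []) [v0]" unfolding circ_valid_def cyc_eq_def by simp
  moreover have "\<forall>u\<in>set [v0]. (\<lambda>_. []) u = [] \<longrightarrow> set [v0] = {u}" by simp
  ultimately have "length (filter (\<lambda>M. v \<in> M) Ms) + (face_count (\<lambda>_. []) v - 1)
      \<le> face_count rotf v - 1"
    by (rule alg_run_face_count[OF assms(2)])
  moreover have "face_count (\<lambda>_. []) v = 0" by (simp add: face_count_def darts_at_def)
  ultimately show ?thesis using face_count_le_length[of rotf v] by simp
qed

end
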